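(* Let $K$ and $L$ be compact Hausdorff spaces and $\phi:K\to L$ a continuous surjection. If $K$ has the extension property and $L$ is scattered of finite height, then the Banach subalgebra $\phi^*C(L)=\{f\circ\phi: f\in C(L)\}$ of $C(K)$ is complemented in $C(K)$; equivalently, $\phi$ admits an averaging operator, i.e., a bounded linear operator $P:C(K)\to C(L)$ with $P(f\circ\phi)=f$ for all $f\in C(L)$.
   Context: $C(K)$ denotes the Banach space of real-valued continuous functions on $K$ with the supremum norm. For a closed set $F\subseteq K$, an extension operator for $F$ in $K$ is a bounded linear map $E:C(F)\to C(K)$ such that $E(f)|_F=f$ for all $f\in C(F)$. $K$ has the extension property if every nonempty closed subset of $K$ admits an extension operator in $K$. A scattered space $L$ has finite height if $L^{(n)}=\emptyset$ for some finite $n$, where $L^{(n)}$ denotes the $n$-th Cantor--Bendixson derivative (iterated set of non-isolated points). *)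

theory Defs
  imports "HOL-Analysis.Analysis"
begin

text \<open>C(X): real-valued continuous functions on the space X, represented
  extensionally (value 0 outside the underlying set of X).\<close>
definition cspace :: "'a topology \<Rightarrow> ('a \<Rightarrow> real) set" where
  "cspace X = {f. continuous_map X euclideanreal f \<and> (\<forall>x. x \<notin> topspace X \<longrightarrow> f x = 0)}"

definition supnorm :: "'a topology \<Rightarrow> ('a \<Rightarrow> real) \<Rightarrow> real" where
  "supnorm X f = (SUP x\<in>topspace X. \<bar>f x\<bar>)"

definition lin_op :: "'a topology \<Rightarrow> 'b topology \<Rightarrow> (('a \<Rightarrow> real) \<Rightarrow> ('b \<Rightarrow> real)) \<Rightarrow> bool" where
  "lin_op X Y T \<longleftrightarrow>
     (\<forall>f\<in>cspace X. T f \<in> cspace Y) \<and>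
     (\<forall>f\<in>cspace X. \<forall>g\<in>cspace X. \<forall>a b::real.
        T (\<lambda>x. a * f x + b * g x) = (\<lambda>y. a * T f y + b * T g y))"

definition bounded_lin_op :: "'a topology \<Rightarrow> 'b topology \<Rightarrow> (('a \<Rightarrow> real) \<Rightarrow> ('b \<Rightarrow> real)) \<Rightarrow> bool" where
  "bounded_lin_op X Y T \<longleftrightarrow> lin_op X Y T \<and>
     (\<exists>M. \<forall>f\<in>cspace X. supnorm Y (T f) \<le> M * supnorm X f)"

definition extension_operator :: "'a topology \<Rightarrow> 'a set \<Rightarrow> (('a \<Rightarrow> real) \<Rightarrow> ('a \<Rightarrow> real)) \<Rightarrow> bool" where
  "extension_operator K F E \<longleftrightarrow> bounded_lin_op (subtopology K F) K E \<and>
     (\<forall>f\<in>cspace (subtopology K F). \<forall>x\<in>F. E f x = f x)"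

definition extension_property :: "'a topology \<Rightarrow> bool" where
  "extension_property K \<longleftrightarrow>
     (\<forall>F. closedin K F \<and> F \<noteq> {} \<longrightarrow> (\<exists>E. extension_operator K F E))"

definition scattered_space :: "'a topology \<Rightarrow> bool" where
  "scattered_space X \<longleftrightarrow>
     (\<forall>S. S \<subseteq> topspace X \<and> S \<noteq> {} \<longrightarrow> (\<exists>x\<in>S. x \<notin> X derived_set_of S))"

definition cb_derivative :: "'a topology \<Rightarrow> nat \<Rightarrow> 'a set" where
  "cb_derivative X n = ((\<lambda>S. X derived_set_of S) ^^ n) (topspace X)"

definition finite_height :: "'a topology \<Rightarrow> bool" where
  "finite_height X \<longleftrightarrow> (\<exists>n. cb_derivative X n = {})"

definition pullback :: "'a topology \<Rightarrow> ('a \<Rightarrow> 'b) \<Rightarrow> ('b \<Rightarrow> real) \<Rightarrow> ('a \<Rightarrow> real)" where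
  "pullback K \<phi> f = (\<lambda>x. if x \<in> topspace K then f (\<phi> x) else 0)"

definition complemented :: "'a topology \<Rightarrow> ('a \<Rightarrow> real) set \<Rightarrow> bool" where
  "complemented K V \<longleftrightarrow> (\<exists>Q. bounded_lin_op K K Q \<and>
     (\<forall>f\<in>cspace K. Q f \<in> V) \<and> (\<forall>g\<in>V. Q g = g))"

end

theory Submission
  imports Defs
begin

text \<open>Induction on the height of L. Let S be the derived set of L and T its preimage in K;
  T inherits the extension property and S has smaller height, so there is an averaging operator
  P1 : C(T) \<rightarrow> C(S) for \<phi>. Given g in C(K), set P g = P1 (g|T) on S. Using an extension operator
  E for T, the function g - E (g|T) + E ((P1 (g|T)) \<circ> \<phi>) agrees on T with (P g) \<circ> \<phi>; off S every
  point is isolated, so P g may be defined there as the value of this function at any preimage.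
  Continuity at points of S follows because \<phi> is a closed map.\<close>

text \<open>On an empty space supnorm is the junk value Sup {}; cnorm is 0 there instead.\<close>
definition cnorm :: "'a topology \<Rightarrow> ('a \<Rightarrow> real) \<Rightarrow> real" where
  "cnorm X f = (if topspace X = {} then 0 else supnorm X f)"

lemma abs_le_cnorm:
  assumes "compact_space X" "f \<in> cspace X" "x \<in> topspace X"
  shows "\<bar>f x\<bar> \<le> cnorm X f"
proof -
  have "compactin euclideanreal ((\<lambda>x. \<bar>f x\<bar>) ` topspace X)"
    using assms(1,2) unfolding cspace_def compact_space_def
    by (intro image_compactin[of X]) (auto intro: continuous_intros)
  then have "bdd_above ((\<lambda>x. \<bar>f x\<bar>) ` topspace X)"
    by (simp add: bounded_imp_bdd_above compact_imp_bounded)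
  then show ?thesis
    using assms(3) unfolding cnorm_def supnorm_def by (auto intro: cSUP_upper)
qed

lemma cnorm_nonneg:
  assumes "compact_space X" "f \<in> cspace X"
  shows "0 \<le> cnorm X f"
proof (cases "topspace X = {}")
  case False
  then obtain x where "x \<in> topspace X"
    by blast
  then show ?thesis
    using abs_le_cnorm[OF assms] by (meson abs_ge_zero order_trans)
qed (simp add: cnorm_def)

lemma cnorm_le:
  assumes "\<And>x. x \<in> topspace X \<Longrightarrow> \<bar>f x\<bar> \<le> B" "0 \<le> B"
  shows "cnorm X f \<le> B"
  using assms unfolding cnorm_def supnorm_def by (auto intro: cSUP_least)

lemma lin_op_cspace: "lin_op X Y T \<Longrightarrow> f \<in> cspace X \<Longrightarrow> T f \<in> cspace Y"
  by (simp add: lin_op_def)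

lemma lin_op_lincomb:
  "lin_op X Y T \<Longrightarrow> f \<in> cspace X \<Longrightarrow> g \<in> cspace X \<Longrightarrow>
     T (\<lambda>x. a * f x + b * g x) = (\<lambda>y. a * T f y + b * T g y)"
  by (simp add: lin_op_def)

lemma bounded_lin_op_lin_op: "bounded_lin_op X Y T \<Longrightarrow> lin_op X Y T"
  by (simp add: bounded_lin_op_def)

lemma bounded_lin_op_pointwise:
  assumes "bounded_lin_op X Y T" "compact_space X" "compact_space Y"
  obtains M where "M \<ge> 0" "\<And>f y. f \<in> cspace X \<Longrightarrow> y \<in> topspace Y \<Longrightarrow> \<bar>T f y\<bar> \<le> M * cnorm X f"
proof (cases "topspace X = {}")
  case True
  then have "cspace X = {\<lambda>x. 0}"
    by (auto simp: cspace_def)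
  moreover have "T (\<lambda>x. 0) = (\<lambda>y. 0)"
    using lin_op_lincomb[of X Y T "\<lambda>x. 0" "\<lambda>x. 0" 0 0] assms(1) \<open>cspace X = _\<close>
    by (simp add: bounded_lin_op_def)
  ultimately show ?thesis
    using that[of 0] by auto
next
  case False
  obtain M where M: "\<forall>f\<in>cspace X. supnorm Y (T f) \<le> M * supnorm X f"
    using assms(1) unfolding bounded_lin_op_def by blast
  have "\<bar>T f y\<bar> \<le> max M 0 * cnorm X f" if f: "f \<in> cspace X" and y: "y \<in> topspace Y" for f y
  proof -
    have "T f \<in> cspace Y"
      using assms(1) f by (blast intro: bounded_lin_op_lin_op lin_op_cspace)
    then have "\<bar>T f y\<bar> \<le> cnorm Y (T f)"
      using abs_le_cnorm[OF assms(3) _ y] by blast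
    also have "\<dots> = supnorm Y (T f)"
      using y by (auto simp: cnorm_def)
    also have "\<dots> \<le> M * cnorm X f"
      using M f False by (simp add: cnorm_def)
    also have "\<dots> \<le> max M 0 * cnorm X f"
      by (intro mult_right_mono cnorm_nonneg assms(2) f) simp
    finally show ?thesis .
  qed
  then show ?thesis
    using that[of "max M 0"] by auto
qed

lemma bounded_lin_opI:
  assumes "lin_op X Y T" "topspace Y = {} \<Longrightarrow> topspace X = {}"
    and "\<And>f y. f \<in> cspace X \<Longrightarrow> y \<in> topspace Y \<Longrightarrow> \<bar>T f y\<bar> \<le> M * cnorm X f"
  shows "bounded_lin_op X Y T"
  unfolding bounded_lin_op_def
proof (intro conjI assms(1))
  show "\<exists>M. \<forall>f\<in>cspace X. supnorm Y (T f) \<le> M * supnorm X f"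
  proof (cases "topspace Y = {}")
    case True
    then show ?thesis
      using assms(2) by (intro exI[of _ 1]) (simp add: supnorm_def)
  next
    case False
    have "supnorm Y (T f) \<le> (if topspace X = {} then 0 else M) * supnorm X f" if "f \<in> cspace X" for f
      unfolding supnorm_def using False assms(3)[OF that]
      by (intro cSUP_least) (auto simp: cnorm_def supnorm_def)
    then show ?thesis
      by blast
  qed
qed

definition averaging_operator ::
    "'a topology \<Rightarrow> 'b topology \<Rightarrow> ('a \<Rightarrow> 'b) \<Rightarrow> (('a \<Rightarrow> real) \<Rightarrow> ('b \<Rightarrow> real)) \<Rightarrow> bool" where
  "averaging_operator K L \<phi> P \<longleftrightarrow>
     bounded_lin_op K L P \<and> (\<forall>f\<in>cspace L. P (pullback K \<phi> f) = f)"

lemma pullback_in_cspace: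
  assumes "continuous_map K L \<phi>" "f \<in> cspace L"
  shows "pullback K \<phi> f \<in> cspace K"
proof -
  have "continuous_map K euclideanreal (f \<circ> \<phi>)"
    using assms continuous_map_compose unfolding cspace_def by blast
  then have "continuous_map K euclideanreal (pullback K \<phi> f)"
    by (rule continuous_map_eq) (simp add: pullback_def)
  then show ?thesis
    by (simp add: cspace_def pullback_def)
qed

lemma cnorm_pullback_le:
  assumes "compact_space L" "continuous_map K L \<phi>" "f \<in> cspace L"
  shows "cnorm K (pullback K \<phi> f) \<le> cnorm L f"
proof (rule cnorm_le)
  fix x assume x: "x \<in> topspace K"
  then have "\<phi> x \<in> topspace L"
    using assms(2) by (meson continuous_map_image_subset_topspace image_subset_iff)
  then show "\<bar>pullback K \<phi> f x\<bar> \<le> cnorm L f"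
    using x abs_le_cnorm[OF assms(1,3)] by (simp add: pullback_def)
qed (rule cnorm_nonneg[OF assms(1,3)])

lemma pullback_lincomb:
  "pullback K \<phi> (\<lambda>y. a * f y + b * g y) = (\<lambda>x. a * pullback K \<phi> f x + b * pullback K \<phi> g x)"
  by (auto simp: pullback_def fun_eq_iff)

definition restrict_zero :: "'a set \<Rightarrow> ('a \<Rightarrow> real) \<Rightarrow> 'a \<Rightarrow> real" where
  "restrict_zero T g = (\<lambda>x. if x \<in> T then g x else 0)"

lemma restrict_zero_in_cspace:
  assumes "g \<in> cspace K" "T \<subseteq> topspace K"
  shows "restrict_zero T g \<in> cspace (subtopology K T)"
proof -
  have "continuous_map (subtopology K T) euclideanreal g"
    using assms(1) by (simp add: cspace_def continuous_map_from_subtopology)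
  then have "continuous_map (subtopology K T) euclideanreal (restrict_zero T g)"
    by (rule continuous_map_eq) (simp add: restrict_zero_def)
  then show ?thesis
    using assms(2) by (auto simp: cspace_def restrict_zero_def)
qed

lemma restrict_zero_lincomb:
  "restrict_zero T (\<lambda>x. a * f x + b * g x) = (\<lambda>x. a * restrict_zero T f x + b * restrict_zero T g x)"
  by (auto simp: restrict_zero_def fun_eq_iff)

lemma cnorm_restrict_zero_le:
  assumes "compact_space K" "g \<in> cspace K"
  shows "cnorm (subtopology K T) (restrict_zero T g) \<le> cnorm K g"
  using abs_le_cnorm[OF assms] cnorm_nonneg[OF assms]
  by (intro cnorm_le) (auto simp: restrict_zero_def)

lemma extension_operator_empty: "extension_operator K {} (\<lambda>f x. 0)"
  unfolding extension_operator_def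
  by (auto intro!: bounded_lin_opI[where M=0] simp: lin_op_def cspace_def)

lemma extension_operator_exists:
  "extension_property K \<Longrightarrow> closedin K F \<Longrightarrow> \<exists>E. extension_operator K F E"
  using extension_operator_empty unfolding extension_property_def by blast

lemma extension_property_subtopology:
  assumes "extension_property K" "compact_space K" "closedin K T"
  shows "extension_property (subtopology K T)"
  unfolding extension_property_def
proof (intro allI impI)
  fix F assume F: "closedin (subtopology K T) F \<and> F \<noteq> {}"
  then have FK: "closedin K F" and FT: "F \<subseteq> T"
    using closedin_closed_subtopology[OF assms(3)] by auto
  then obtain E where E: "extension_operator K F E"
    using assms(1) F unfolding extension_property_def by blast
  have KF: "subtopology (subtopology K T) F = subtopology K F"
    using FT by (simp add: subtopology_subtopology Int_absorb1)
  have TK: "T \<subseteq> topspace K"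
    using assms(3) closedin_subset by auto
  have compact_F: "compact_space (subtopology K F)"
    by (simp add: FK assms(2) closedin_compact_space compact_space_subtopology)
  have E_bounded: "bounded_lin_op (subtopology K F) K E"
    and E_ext: "\<forall>f\<in>cspace (subtopology K F). \<forall>x\<in>F. E f x = f x"
    using E unfolding extension_operator_def by auto
  obtain M where M: "\<And>f y. f \<in> cspace (subtopology K F) \<Longrightarrow> y \<in> topspace K \<Longrightarrow>
      \<bar>E f y\<bar> \<le> M * cnorm (subtopology K F) f"
    using bounded_lin_op_pointwise[OF E_bounded compact_F assms(2)] by blast
  have "lin_op (subtopology K F) (subtopology K T) (\<lambda>f. restrict_zero T (E f))"
    using bounded_lin_op_lin_op[OF E_bounded] TK
    by (auto simp: lin_op_def restrict_zero_lincomb intro: restrict_zero_in_cspace)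
  then have "bounded_lin_op (subtopology K F) (subtopology K T) (\<lambda>f. restrict_zero T (E f))"
    using FT M by (intro bounded_lin_opI[where M=M]) (auto simp: restrict_zero_def)
  then have "extension_operator (subtopology K T) F (\<lambda>f. restrict_zero T (E f))"
    using E_ext FT by (auto simp: extension_operator_def KF restrict_zero_def)
  then show "\<exists>E. extension_operator (subtopology K T) F E"
    by blast
qed

lemma cb_derivative_Suc: "cb_derivative L (Suc k) = L derived_set_of (cb_derivative L k)"
  by (simp add: cb_derivative_def)

lemma cb_derivative_subset_topspace: "cb_derivative L k \<subseteq> topspace L"
  by (cases k) (simp_all add: cb_derivative_def derived_set_of_subset_topspace)

lemma cb_derivative_subset_derived: "cb_derivative L (Suc k) \<subseteq> L derived_set_of topspace L"
  by (simp add: cb_derivative_Suc derived_set_of_mono cb_derivative_subset_topspace)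

lemma cb_derivative_derived_subtopology:
  "cb_derivative (subtopology L (L derived_set_of topspace L)) n = cb_derivative L (Suc n)"
proof (induction n)
  case 0
  show ?case
    by (simp add: cb_derivative_def derived_set_of_subset_topspace Int_absorb1)
next
  case (Suc n)
  let ?S = "L derived_set_of topspace L"
  have "cb_derivative (subtopology L ?S) (Suc n) = ?S \<inter> L derived_set_of (?S \<inter> cb_derivative L (Suc n))"
    by (simp only: cb_derivative_Suc Suc derived_set_of_subtopology)
  also have "\<dots> = cb_derivative L (Suc (Suc n))"
    using cb_derivative_subset_derived[of L n] cb_derivative_subset_derived[of L "Suc n"]
    by (simp only: cb_derivative_Suc Int_absorb1)
  finally show ?case .
qed

lemma topcontinuous_at_isolated:
  assumes "x \<in> topspace X" "x \<notin> X derived_set_of topspace X" "f \<in> topspace X \<rightarrow> topspace Y"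
  shows "topcontinuous_at X Y f x"
proof -
  obtain U where U: "x \<in> U" "openin X U" "\<forall>y\<in>U. y \<in> topspace X \<longrightarrow> y = x"
    using assms(1,2) unfolding in_derived_set_of by blast
  then have "\<forall>y\<in>U. y = x"
    using openin_subset by blast
  show ?thesis
    unfolding topcontinuous_at_def
  proof (intro conjI allI impI assms(1,3))
    fix V assume "openin Y V \<and> f x \<in> V"
    then show "\<exists>U. openin X U \<and> x \<in> U \<and> (\<forall>y\<in>U. f y \<in> V)"
      using U(1,2) \<open>\<forall>y\<in>U. y = x\<close> by metis
  qed
qed

lemma glue_neighbourhood_at_derived:
  assumes closed: "closed_map K L \<phi>"
    and h: "continuous_map (subtopology L S) Y h"
    and w: "continuous_map K Y w"
    and w_fibres: "\<And>x. x \<in> topspace K \<Longrightarrow> \<phi> x \<in> S \<Longrightarrow> w x = h (\<phi> x)"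
    and c: "\<And>y. y \<in> topspace L \<Longrightarrow> c y \<in> topspace K \<and> \<phi> (c y) = y"
    and y0: "y0 \<in> topspace L" "y0 \<in> S" and G: "openin Y G" "h y0 \<in> G"
  obtains U where "openin L U" "y0 \<in> U" "\<And>y. y \<in> U \<Longrightarrow> (if y \<in> S then h y else w (c y)) \<in> G"
proof -
  have "openin (subtopology L S) {y \<in> topspace (subtopology L S). h y \<in> G}"
    using G by (intro openin_continuous_map_preimage[OF h])
  then obtain V where V: "openin L V" "{y \<in> topspace L \<inter> S. h y \<in> G} = V \<inter> S"
    unfolding openin_subtopology topspace_subtopology by blast
  have W: "openin K {x \<in> topspace K. w x \<in> G}"
    using G by (intro openin_continuous_map_preimage[OF w])
  have "{x \<in> topspace K. \<phi> x = y0} \<subseteq> {x \<in> topspace K. w x \<in> G}"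
    using w_fibres y0 G by auto
  then obtain N where N: "openin L N" "y0 \<in> N" "{x \<in> topspace K. \<phi> x \<in> N} \<subseteq> {x \<in> topspace K. w x \<in> G}"
    using conjunct2[OF closed[unfolded closed_map_fibre_neighbourhood], rule_format, OF conjI[OF W conjI[OF y0(1)]]]
    by blast
  have "y0 \<in> {y \<in> topspace L \<inter> S. h y \<in> G}"
    using y0 G by blast
  then have "y0 \<in> V"
    unfolding V(2) by blast
  moreover have "(if y \<in> S then h y else w (c y)) \<in> G" if "y \<in> N \<inter> V" for y
  proof (cases "y \<in> S")
    case True
    then have "y \<in> {y \<in> topspace L \<inter> S. h y \<in> G}"
      unfolding V(2) using that by blast
    then show ?thesis
      using True by simp
  next
    case False
    have "y \<in> topspace L"
      using that openin_subset[OF N(1)] by blast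
    then have "c y \<in> {x \<in> topspace K. \<phi> x \<in> N}"
      using that c by auto
    then show ?thesis
      using False N(3) by auto
  qed
  ultimately show ?thesis
    using that[of "N \<inter> V"] N(1,2) V(1) by (auto intro: openin_Int)
qed

lemma continuous_map_glue_over_isolated:
  assumes closed: "closed_map K L \<phi>"
    and derived: "L derived_set_of topspace L \<subseteq> S"
    and h: "continuous_map (subtopology L S) Y h"
    and w: "continuous_map K Y w"
    and w_fibres: "\<And>x. x \<in> topspace K \<Longrightarrow> \<phi> x \<in> S \<Longrightarrow> w x = h (\<phi> x)"
    and c: "\<And>y. y \<in> topspace L \<Longrightarrow> c y \<in> topspace K \<and> \<phi> (c y) = y"
  shows "continuous_map L Y (\<lambda>y. if y \<in> S then h y else w (c y))"
    (is "continuous_map L Y ?g")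
  unfolding continuous_map_eq_topcontinuous_at
proof
  fix y0 assume y0: "y0 \<in> topspace L"
  have maps: "?g \<in> topspace L \<rightarrow> topspace Y"
  proof
    fix y assume "y \<in> topspace L"
    then show "?g y \<in> topspace Y"
      using continuous_map_image_subset_topspace[OF h] continuous_map_image_subset_topspace[OF w] c
      by (cases "y \<in> S") auto
  qed
  show "topcontinuous_at L Y ?g y0"
  proof (cases "y0 \<in> S")
    case False
    then have "y0 \<notin> L derived_set_of topspace L"
      using derived by blast
    then show ?thesis
      by (rule topcontinuous_at_isolated[OF y0 _ maps])
  next
    case True
    show ?thesis
      unfolding topcontinuous_at_def
    proof (intro conjI allI impI y0 maps)
      fix G assume "openin Y G \<and> ?g y0 \<in> G"
      then obtain U where "openin L U" "y0 \<in> U" "\<And>y. y \<in> U \<Longrightarrow> ?g y \<in> G"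
        using glue_neighbourhood_at_derived[OF closed h w w_fibres c y0 True] True by auto
      then show "\<exists>U. openin L U \<and> y0 \<in> U \<and> (\<forall>y\<in>U. ?g y \<in> G)"
        by blast
    qed
  qed
qed

locale derived_set_setting =
  fixes K :: "'a topology" and L :: "'b topology" and \<phi> :: "'a \<Rightarrow> 'b"
    and S :: "'b set" and T :: "'a set"
  assumes compact_K: "compact_space K" and compact_L: "compact_space L"
    and Hausdorff_L: "Hausdorff_space L"
    and continuous: "continuous_map K L \<phi>" and surjective: "\<phi> ` topspace K = topspace L"
    and S_eq: "S = L derived_set_of topspace L"
    and T_eq: "T = {x \<in> topspace K. \<phi> x \<in> S}"
begin

lemma S_subset: "S \<subseteq> topspace L"
  by (simp add: S_eq derived_set_of_subset_topspace)

lemma T_subset: "T \<subseteq> topspace K"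
  by (auto simp: T_eq)

lemma closedin_S: "closedin L S"
  by (simp add: S_eq Hausdorff_L closedin_derived_set_of)

lemma closedin_T: "closedin K T"
  unfolding T_eq using continuous closedin_S by (rule closedin_continuous_map_preimage)

lemma compact_T: "compact_space (subtopology K T)"
  by (simp add: closedin_T compact_K closedin_compact_space compact_space_subtopology)

lemma compact_S: "compact_space (subtopology L S)"
  by (simp add: closedin_S compact_L closedin_compact_space compact_space_subtopology)

lemma continuous_T_S: "continuous_map (subtopology K T) (subtopology L S) \<phi>"
  unfolding continuous_map_in_subtopology
  using continuous_map_from_subtopology[OF continuous] by (auto simp: T_eq)

lemma surjective_T_S: "\<phi> ` topspace (subtopology K T) = topspace (subtopology L S)"
proof -
  have "S \<subseteq> \<phi> ` T"
  proof
    fix y assume "y \<in> S"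
    then obtain x where "x \<in> topspace K" "\<phi> x = y"
      using S_subset surjective by (metis imageE subsetD)
    then show "y \<in> \<phi> ` T"
      using \<open>y \<in> S\<close> by (auto simp: T_eq)
  qed
  then have "\<phi> ` T = S"
    by (auto simp: T_eq)
  then show ?thesis
    using S_subset T_subset by (simp add: Int_absorb1)
qed

definition pick :: "'b \<Rightarrow> 'a" where
  "pick y = (SOME x. x \<in> topspace K \<and> \<phi> x = y)"

lemma pick_preimage:
  assumes "y \<in> topspace L"
  shows "pick y \<in> topspace K \<and> \<phi> (pick y) = y"
proof -
  obtain x where "x \<in> topspace K" "\<phi> x = y"
    using assms surjective by (metis imageE)
  then show ?thesis
    unfolding pick_def by (metis (mono_tags, lifting) someI)
qed

end

locale derived_set_lifting = derived_set_setting +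
  fixes P1 :: "('a \<Rightarrow> real) \<Rightarrow> 'b \<Rightarrow> real" and E :: "('a \<Rightarrow> real) \<Rightarrow> 'a \<Rightarrow> real"
  assumes P1: "averaging_operator (subtopology K T) (subtopology L S) \<phi> P1"
    and E: "extension_operator K T E"
begin

definition average_on_S :: "('a \<Rightarrow> real) \<Rightarrow> 'b \<Rightarrow> real" where
  "average_on_S g = P1 (restrict_zero T g)"

definition corrected :: "('a \<Rightarrow> real) \<Rightarrow> 'a \<Rightarrow> real" where
  "corrected g x = g x - E (restrict_zero T g) x + E (pullback (subtopology K T) \<phi> (average_on_S g)) x"

definition lifted :: "('a \<Rightarrow> real) \<Rightarrow> 'b \<Rightarrow> real" where
  "lifted g y = (if y \<in> topspace L then if y \<in> S then average_on_S g y else corrected g (pick y) else 0)"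

lemma P1_bounded: "bounded_lin_op (subtopology K T) (subtopology L S) P1"
  using P1 by (simp add: averaging_operator_def)

lemma E_bounded: "bounded_lin_op (subtopology K T) K E"
  using E by (simp add: extension_operator_def)

lemma E_extends: "u \<in> cspace (subtopology K T) \<Longrightarrow> x \<in> T \<Longrightarrow> E u x = u x"
  using E by (simp add: extension_operator_def)

lemma average_on_S_in_cspace: "g \<in> cspace K \<Longrightarrow> average_on_S g \<in> cspace (subtopology L S)"
  unfolding average_on_S_def
  by (intro lin_op_cspace[OF bounded_lin_op_lin_op[OF P1_bounded]] restrict_zero_in_cspace T_subset)

lemma pullback_average_in_cspace:
  "g \<in> cspace K \<Longrightarrow> pullback (subtopology K T) \<phi> (average_on_S g) \<in> cspace (subtopology K T)"
  by (intro pullback_in_cspace[OF continuous_T_S] average_on_S_in_cspace)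

lemma average_on_S_lincomb:
  "f \<in> cspace K \<Longrightarrow> g \<in> cspace K \<Longrightarrow>
    average_on_S (\<lambda>x. a * f x + b * g x) = (\<lambda>y. a * average_on_S f y + b * average_on_S g y)"
  unfolding average_on_S_def restrict_zero_lincomb
  by (intro lin_op_lincomb[OF bounded_lin_op_lin_op[OF P1_bounded]] restrict_zero_in_cspace T_subset)

lemma corrected_eq:
  "corrected g = (\<lambda>x. g x - E (restrict_zero T g) x + E (pullback (subtopology K T) \<phi> (average_on_S g)) x)"
  by (simp add: fun_eq_iff corrected_def)

lemma corrected_continuous:
  assumes g: "g \<in> cspace K"
  shows "continuous_map K euclideanreal (corrected g)"
proof -
  have "E (restrict_zero T g) \<in> cspace K" "E (pullback (subtopology K T) \<phi> (average_on_S g)) \<in> cspace K"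
    using g T_subset lin_op_cspace[OF bounded_lin_op_lin_op[OF E_bounded]]
    by (blast intro: restrict_zero_in_cspace pullback_average_in_cspace)+
  then show ?thesis
    using g unfolding corrected_eq cspace_def by (intro continuous_map_add continuous_map_diff) auto
qed

lemma corrected_on_T:
  assumes g: "g \<in> cspace K" and x: "x \<in> T"
  shows "corrected g x = average_on_S g (\<phi> x)"
proof -
  have "E (restrict_zero T g) x = g x"
    using E_extends[OF restrict_zero_in_cspace[OF g T_subset] x] x by (simp add: restrict_zero_def)
  moreover have "E (pullback (subtopology K T) \<phi> (average_on_S g)) x = average_on_S g (\<phi> x)"
    using E_extends[OF pullback_average_in_cspace[OF g] x] x T_subset by (auto simp: pullback_def)
  ultimately show ?thesis
    by (simp add: corrected_def)
qed

lemma lifted_in_cspace: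
  assumes g: "g \<in> cspace K"
  shows "lifted g \<in> cspace L"
proof -
  have "continuous_map L euclideanreal (\<lambda>y. if y \<in> S then average_on_S g y else corrected g (pick y))"
  proof (rule continuous_map_glue_over_isolated[where K=K and \<phi>=\<phi> and w="corrected g" and c=pick])
    show "closed_map K L \<phi>"
      by (simp add: Hausdorff_L compact_K continuous continuous_imp_closed_map)
    show "L derived_set_of topspace L \<subseteq> S"
      by (simp add: S_eq)
    show "continuous_map (subtopology L S) euclideanreal (average_on_S g)"
      using average_on_S_in_cspace[OF g] by (simp add: cspace_def)
  qed (use g pick_preimage corrected_continuous corrected_on_T in \<open>auto simp: T_eq\<close>)
  then have "continuous_map L euclideanreal (lifted g)"
    by (rule continuous_map_eq) (simp add: lifted_def)
  then show ?thesis
    by (simp add: cspace_def lifted_def)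
qed

lemma lifted_lincomb:
  assumes "f \<in> cspace K" "g \<in> cspace K"
  shows "lifted (\<lambda>x. a * f x + b * g x) = (\<lambda>y. a * lifted f y + b * lifted g y)"
proof
  let ?h = "\<lambda>x. a * f x + b * g x"
  have E_restrict: "E (restrict_zero T ?h) = (\<lambda>y. a * E (restrict_zero T f) y + b * E (restrict_zero T g) y)"
    unfolding restrict_zero_lincomb using assms
    by (intro lin_op_lincomb[OF bounded_lin_op_lin_op[OF E_bounded]] restrict_zero_in_cspace T_subset)
  have E_average: "E (pullback (subtopology K T) \<phi> (average_on_S ?h))
      = (\<lambda>y. a * E (pullback (subtopology K T) \<phi> (average_on_S f)) y
           + b * E (pullback (subtopology K T) \<phi> (average_on_S g)) y)"
    unfolding average_on_S_lincomb[OF assms] pullback_lincomb using assms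
    by (intro lin_op_lincomb[OF bounded_lin_op_lin_op[OF E_bounded]] pullback_average_in_cspace)
  fix y
  show "lifted ?h y = a * lifted f y + b * lifted g y"
    unfolding lifted_def corrected_def E_restrict E_average unfolding average_on_S_lincomb[OF assms]
    by (simp add: algebra_simps)
qed

lemma average_on_S_bound:
  obtains M where "M \<ge> 0" "\<And>g y. g \<in> cspace K \<Longrightarrow> y \<in> S \<Longrightarrow> \<bar>average_on_S g y\<bar> \<le> M * cnorm K g"
proof -
  obtain M where M: "M \<ge> 0"
    "\<And>u y. u \<in> cspace (subtopology K T) \<Longrightarrow> y \<in> topspace (subtopology L S) \<Longrightarrow> \<bar>P1 u y\<bar> \<le> M * cnorm (subtopology K T) u"
    using bounded_lin_op_pointwise[OF P1_bounded compact_T compact_S] by blast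
  have "\<bar>average_on_S g y\<bar> \<le> M * cnorm K g" if "g \<in> cspace K" "y \<in> S" for g y
  proof -
    have "\<bar>average_on_S g y\<bar> \<le> M * cnorm (subtopology K T) (restrict_zero T g)"
      unfolding average_on_S_def using that S_subset restrict_zero_in_cspace[OF _ T_subset]
      by (intro M(2)) auto
    also have "\<dots> \<le> M * cnorm K g"
      using M(1) cnorm_restrict_zero_le[OF compact_K that(1)] by (rule mult_left_mono[rotated])
    finally show ?thesis .
  qed
  then show ?thesis
    using M(1) that by blast
qed

lemma corrected_bound:
  obtains M where "M \<ge> 0" "\<And>g x. g \<in> cspace K \<Longrightarrow> x \<in> topspace K \<Longrightarrow> \<bar>corrected g x\<bar> \<le> M * cnorm K g"
proof -
  obtain ME where ME: "ME \<ge> 0"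
    "\<And>u x. u \<in> cspace (subtopology K T) \<Longrightarrow> x \<in> topspace K \<Longrightarrow> \<bar>E u x\<bar> \<le> ME * cnorm (subtopology K T) u"
    using bounded_lin_op_pointwise[OF E_bounded compact_T compact_K] by blast
  obtain M1 where M1: "M1 \<ge> 0" "\<And>g y. g \<in> cspace K \<Longrightarrow> y \<in> S \<Longrightarrow> \<bar>average_on_S g y\<bar> \<le> M1 * cnorm K g"
    using average_on_S_bound by blast
  have "\<bar>corrected g x\<bar> \<le> (1 + ME + ME * M1) * cnorm K g" if g: "g \<in> cspace K" and x: "x \<in> topspace K" for g x
  proof -
    have "cnorm (subtopology K T) (pullback (subtopology K T) \<phi> (average_on_S g)) \<le> cnorm (subtopology L S) (average_on_S g)"
      by (intro cnorm_pullback_le compact_S continuous_T_S average_on_S_in_cspace g)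
    also have "\<dots> \<le> M1 * cnorm K g"
      using M1 g S_subset by (intro cnorm_le) (auto intro: mult_nonneg_nonneg cnorm_nonneg compact_K)
    finally have "\<bar>E (pullback (subtopology K T) \<phi> (average_on_S g)) x\<bar> \<le> ME * (M1 * cnorm K g)"
      using ME g x pullback_average_in_cspace by (meson mult_left_mono order_trans)
    moreover have "\<bar>E (restrict_zero T g) x\<bar> \<le> ME * cnorm K g"
      using ME g x restrict_zero_in_cspace[OF _ T_subset] cnorm_restrict_zero_le[OF compact_K g]
      by (meson mult_left_mono order_trans)
    moreover have "\<bar>g x\<bar> \<le> cnorm K g"
      by (rule abs_le_cnorm[OF compact_K g x])
    ultimately show ?thesis
      unfolding corrected_def by (simp add: algebra_simps)
  qed
  then show ?thesis
    using ME(1) M1(1) that[of "1 + ME + ME * M1"] by simp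
qed

lemma restrict_zero_pullback:
  "restrict_zero T (pullback K \<phi> f) = pullback (subtopology K T) \<phi> (restrict_zero S f)"
  by (auto simp: restrict_zero_def pullback_def T_eq fun_eq_iff)

lemma average_on_S_pullback:
  assumes "f \<in> cspace L"
  shows "average_on_S (pullback K \<phi> f) = restrict_zero S f"
proof -
  have "restrict_zero S f \<in> cspace (subtopology L S)"
    by (rule restrict_zero_in_cspace[OF assms S_subset])
  then show ?thesis
    using P1 by (simp add: average_on_S_def averaging_operator_def restrict_zero_pullback)
qed

lemma corrected_pullback:
  assumes "f \<in> cspace L"
  shows "corrected (pullback K \<phi> f) = pullback K \<phi> f"
  unfolding corrected_eq average_on_S_pullback[OF assms] restrict_zero_pullback by simp

lemma lifted_pullback:
  assumes "f \<in> cspace L"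
  shows "lifted (pullback K \<phi> f) = f"
proof
  fix y
  have "lifted (pullback K \<phi> f) y
      = (if y \<in> topspace L then if y \<in> S then f y else pullback K \<phi> f (pick y) else 0)"
    by (simp add: lifted_def corrected_pullback[OF assms] average_on_S_pullback[OF assms] restrict_zero_def)
  then show "lifted (pullback K \<phi> f) y = f y"
    using assms pick_preimage[of y] by (auto simp: pullback_def cspace_def)
qed

lemma averaging_operator_lifted: "averaging_operator K L \<phi> lifted"
proof -
  obtain M1 where M1: "M1 \<ge> 0" "\<And>g y. g \<in> cspace K \<Longrightarrow> y \<in> S \<Longrightarrow> \<bar>average_on_S g y\<bar> \<le> M1 * cnorm K g"
    using average_on_S_bound by blast
  obtain M2 where M2: "M2 \<ge> 0" "\<And>g x. g \<in> cspace K \<Longrightarrow> x \<in> topspace K \<Longrightarrow> \<bar>corrected g x\<bar> \<le> M2 * cnorm K g"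
    using corrected_bound by blast
  have "\<bar>lifted g y\<bar> \<le> max M1 M2 * cnorm K g" if "g \<in> cspace K" "y \<in> topspace L" for g y
    using M1(2)[OF that(1)] M2(2)[OF that(1)] pick_preimage[OF that(2)] cnorm_nonneg[OF compact_K that(1)]
    by (simp add: lifted_def) (smt (verit, best) max.cobounded1 max.cobounded2 mult_right_mono)
  moreover have "lin_op K L lifted"
    by (simp add: lin_op_def lifted_in_cspace lifted_lincomb)
  ultimately show ?thesis
    unfolding averaging_operator_def using surjective lifted_pullback
    by (intro conjI ballI bounded_lin_opI[where M="max M1 M2"]) auto
qed

end

lemma averaging_operator_exists:
  fixes K :: "'a topology" and L :: "'b topology" and \<phi> :: "'a \<Rightarrow> 'b"
  assumes "cb_derivative L n = {}" "compact_space K" "compact_space L" "Hausdorff_space L"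
    and "continuous_map K L \<phi>" "\<phi> ` topspace K = topspace L" "extension_property K"
  shows "\<exists>P. averaging_operator K L \<phi> P"
  using assms
proof (induction n arbitrary: K L)
  case 0
  then have "topspace L = {}" "topspace K = {}"
    by (auto simp: cb_derivative_def)
  then have "averaging_operator K L \<phi> (\<lambda>g y. 0)"
    unfolding averaging_operator_def
    by (auto intro!: bounded_lin_opI[where M=0] simp: lin_op_def cspace_def)
  then show ?case
    by blast
next
  case (Suc n)
  define S where "S = L derived_set_of topspace L"
  define T where "T = {x \<in> topspace K. \<phi> x \<in> S}"
  interpret derived_set_setting K L \<phi> S T
    using Suc.prems S_def T_def by unfold_locales auto
  have "\<exists>P1. averaging_operator (subtopology K T) (subtopology L S) \<phi> P1"
  proof (rule Suc.IH)
    show "cb_derivative (subtopology L S) n = {}"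
      using Suc.prems(1) by (simp add: S_def cb_derivative_derived_subtopology)
    show "extension_property (subtopology K T)"
      using Suc.prems(7) compact_K closedin_T by (rule extension_property_subtopology)
  qed (use compact_T compact_S continuous_T_S surjective_T_S Hausdorff_L in \<open>auto intro: Hausdorff_space_subtopology\<close>)
  then obtain P1 where P1: "averaging_operator (subtopology K T) (subtopology L S) \<phi> P1"
    by blast
  obtain E where E: "extension_operator K T E"
    using extension_operator_exists[OF Suc.prems(7) closedin_T] by blast
  interpret derived_set_lifting K L \<phi> S T P1 E
    using P1 E by unfold_locales
  show ?case
    using averaging_operator_lifted by blast
qed

lemma complemented_if_averaging_operator:
  assumes "compact_space K" "compact_space L" "continuous_map K L \<phi>" "averaging_operator K L \<phi> P"
  shows "complemented K (pullback K \<phi> ` cspace L)"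
proof -
  have P: "bounded_lin_op K L P" "\<And>f. f \<in> cspace L \<Longrightarrow> P (pullback K \<phi> f) = f"
    using assms(4) by (auto simp: averaging_operator_def)
  obtain M where M: "\<And>f y. f \<in> cspace K \<Longrightarrow> y \<in> topspace L \<Longrightarrow> \<bar>P f y\<bar> \<le> M * cnorm K f"
    using bounded_lin_op_pointwise[OF P(1) assms(1,2)] by blast
  have P_cspace: "P g \<in> cspace L" if "g \<in> cspace K" for g
    by (rule lin_op_cspace[OF bounded_lin_op_lin_op[OF P(1)] that])
  have "lin_op K K (\<lambda>g. pullback K \<phi> (P g))"
    using pullback_in_cspace[OF assms(3) P_cspace] lin_op_lincomb[OF bounded_lin_op_lin_op[OF P(1)]]
    by (simp add: lin_op_def pullback_lincomb)
  moreover have "\<phi> y \<in> topspace L" if "y \<in> topspace K" for y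
    using assms(3) that by (meson continuous_map_image_subset_topspace image_subset_iff)
  ultimately have "bounded_lin_op K K (\<lambda>g. pullback K \<phi> (P g))"
    using M by (intro bounded_lin_opI[where M=M]) (auto simp: pullback_def)
  moreover have "pullback K \<phi> (P g) \<in> pullback K \<phi> ` cspace L" if "g \<in> cspace K" for g
    using P_cspace[OF that] by blast
  ultimately show ?thesis
    unfolding complemented_def using P(2) by (intro exI[of _ "\<lambda>g. pullback K \<phi> (P g)"]) auto
qed

theorem corollary2p5:
  fixes K :: "'a topology" and L :: "'b topology" and \<phi> :: "'a \<Rightarrow> 'b"
  assumes "compact_space K" and "Hausdorff_space K"
    and "compact_space L" and "Hausdorff_space L"
    and "continuous_map K L \<phi>" and "\<phi> ` topspace K = topspace L"
    and "extension_property K"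
    and "scattered_space L" and "finite_height L"
  shows "complemented K (pullback K \<phi> ` cspace L) \<and>
         (\<exists>P. bounded_lin_op K L P \<and> (\<forall>f\<in>cspace L. P (pullback K \<phi> f) = f))"
proof -
  obtain n where "cb_derivative L n = {}"
    using assms(9) unfolding finite_height_def by blast
  then obtain P where "averaging_operator K L \<phi> P"
    using averaging_operator_exists assms(1,3-7) by blast
  then show ?thesis
    using complemented_if_averaging_operator[OF assms(1,3,5)] unfolding averaging_operator_def by blast
qed

end
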